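(* Let $R\ge1$, $0\le m<2^R$, $\mu$ a partition of $m$, and $\lambda$ a $2^R$-parent of $\mu$ with affected hook-length $h=h^\lambda_\mu$. Then, modulo $2$, \[ \eta^\lambda_\mu\equiv N_\lambda(h)-\mathbb{I}_{H(\lambda)}(h-2^{R-1})+\mathbb{I}_{H(\lambda)}(h+2^{R-1})+\mathbb{I}_{H(\lambda)}(h-3\cdot2^{R-1}). \]
   Context: $\mathrm{Od}(N)=\pm1$ according as the odd part of $N\ge1$ is $\equiv1$ or $\equiv3\pmod4$. For a partition $\lambda=(\lambda_1\ge\dots\ge\lambda_k>0)$, $H(\lambda):=\{\lambda_i+k-i\}$; $X^{+r}:=\{x+r:x\in X\}\cup\{0,\dots,r-1\}$. A partition $\lambda$ of $2^R+m$ is a $2^R$-parent of $\mu\vdash m$ ($m<2^R$) if there is $h\in H(\lambda)$, $h\ge2^R$, $h-2^R\notin H(\lambda)$, with $(H(\lambda)\cup\{h-2^R\})\setminus\{h\}=H(\mu)^{+r}$ for some $r\ge0$ (i.e. $\mu$ is obtained by removing a $2^R$ rim hook); this unique $h$ is the affected hook-length $h^\lambda_\mu$. $\eta^\lambda_\mu\in\mathbb{Z}/2$ is defined by $(-1)^{\eta^\lambda_\mu}=\prod_{x\in H(\lambda),x\ne h}\mathrm{Od}(|h-x|)/\mathrm{Od}(|h-2^R-x|)$. $N_\lambda(h):=\#\{y\in H(\lambda):h-2^R<y<h\}$, and $\mathbb{I}_X(x)=1$ if $x\in X$, $0$ otherwise. *)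

theory Defs
  imports Complex_Main "HOL-Computational_Algebra.Primes" "HOL-Number_Theory.Cong"
begin

(* Od(N) = 1 if the odd part of N is 1 mod 4, -1 if it is 3 mod 4 (meaningful for N >= 1) *)
definition odd_part :: "nat \<Rightarrow> nat" where
  "odd_part N = N div 2 ^ multiplicity (2::nat) N"

definition Od :: "nat \<Rightarrow> rat" where
  "Od N = (if odd_part N mod 4 = 1 then 1 else -1)"

definition is_partition :: "nat list \<Rightarrow> nat \<Rightarrow> bool" where
  "is_partition lam n \<longleftrightarrow> sorted (rev lam) \<and> 0 \<notin> set lam \<and> sum_list lam = n"

(* H(lambda) = { lambda_i + k - i : 1 <= i <= k }, with 0-based list index j = i - 1 *)
definition Hset :: "nat list \<Rightarrow> nat set" where
  "Hset lam = {lam ! j + length lam - 1 - j | j. j < length lam}"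

definition shift_set :: "nat set \<Rightarrow> nat \<Rightarrow> nat set" where
  "shift_set X r = (\<lambda>x. x + r) ` X \<union> {0..<r}"

(* lambda (a partition of 2^R + m) is a 2^R-parent of mu (a partition of m, m < 2^R),
   with affected hook length h *)
definition parent_with_hook :: "nat \<Rightarrow> nat list \<Rightarrow> nat list \<Rightarrow> nat \<Rightarrow> bool" where
  "parent_with_hook R lam mu h \<longleftrightarrow>
     h \<in> Hset lam \<and> h \<ge> 2 ^ R \<and> h - 2 ^ R \<notin> Hset lam \<and>
     (\<exists>r. (Hset lam \<union> {h - 2 ^ R}) - {h} = shift_set (Hset mu) r)"

definition eta_prod :: "nat \<Rightarrow> nat list \<Rightarrow> nat \<Rightarrow> rat" where
  "eta_prod R lam h = (\<Prod>x\<in>Hset lam - {h}.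
      Od (nat \<bar>int h - int x\<bar>) / Od (nat \<bar>int h - 2 ^ R - int x\<bar>))"

definition eta :: "nat \<Rightarrow> nat list \<Rightarrow> nat \<Rightarrow> int" where
  "eta R lam h = (if eta_prod R lam h = 1 then 0 else 1)"

definition N_count :: "nat \<Rightarrow> nat list \<Rightarrow> nat \<Rightarrow> int" where
  "N_count R lam h = int (card {y \<in> Hset lam. int h - 2 ^ R < int y \<and> y < h})"

definition Ind :: "nat set \<Rightarrow> int \<Rightarrow> int" where
  "Ind X x = (if x \<in> int ` X then 1 else 0)"

end

theory Submission
  imports Defs
begin

(* For x \<in> H(\<lambda>) - {h} put d = h - x; the size bounds give -2^R < d < 2^(R+1) and d \<noteq> 0, 2^R.
   Writing d = 2^v w with w odd, v < R, the factor Od|d| / Od|d - 2^R| splits as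
   sgn w sgn (w - 2^(R-v)) \<cdot> \<chi>(w) \<chi>(w - 2^(R-v)) with \<chi> the non-trivial character mod 4.
   The signs disagree exactly when 0 < d < 2^R, which N_\<lambda>(h) counts; the characters disagree
   exactly when v = R - 1, i.e. d \<in> {2^(R-1), -2^(R-1), 3 \<cdot> 2^(R-1)}, which the three indicators
   count. So \<eta> is the parity of the sum, and -I \<equiv> I mod 2. *)

lemma Od_pow2_mult_odd:
  assumes "odd q"
  shows "Od (2 ^ k * q) = (if q mod 4 = 1 then 1 else -1)"
proof -
  have "multiplicity 2 (2 ^ k * q) = k"
    by (rule multiplicity_decomposeI) (use assms in auto)
  then show ?thesis by (simp add: Od_def odd_part_def)
qed

lemma Od_eq_1_or_minus_1: "Od N = 1 \<or> Od N = -1"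
  by (simp add: Od_def)

definition chi4 :: "int \<Rightarrow> rat" where
  "chi4 w = (if w mod 4 = 1 then 1 else -1)"

lemma Od_abs_pow2_mult_odd:
  fixes w :: int
  assumes "odd w"
  shows "Od (nat \<bar>2 ^ v * w\<bar>) = (if 0 < w then chi4 w else - chi4 w)"
proof -
  have "nat \<bar>2 ^ v * w\<bar> = 2 ^ v * nat \<bar>w\<bar>"
    by (simp add: abs_mult nat_mult_distrib nat_power_eq)
  moreover have "odd (nat \<bar>w\<bar>)"
    using assms by (simp add: even_nat_iff)
  moreover have "nat \<bar>w\<bar> mod 4 = 1 \<longleftrightarrow> (if 0 < w then w mod 4 = 1 else w mod 4 \<noteq> 1)"
  proof -
    have "int (nat \<bar>w\<bar> mod 4) = \<bar>w\<bar> mod 4"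
      by (simp add: zmod_int)
    then have "nat \<bar>w\<bar> mod 4 = 1 \<longleftrightarrow> \<bar>w\<bar> mod 4 = 1"
      by linarith
    moreover have "\<bar>w\<bar> mod 4 = 1 \<longleftrightarrow> (if 0 < w then w mod 4 = 1 else w mod 4 \<noteq> 1)"
      using assms by (simp add: abs_if) presburger
    ultimately show ?thesis by simp
  qed
  ultimately show ?thesis
    by (simp add: Od_pow2_mult_odd chi4_def)
qed

lemma chi4_mult_chi4_diff_pow2:
  fixes w :: int
  assumes "odd w" and "k \<ge> 1"
  shows "chi4 w * chi4 (w - 2 ^ k) = (if k = 1 then -1 else 1)"
proof (cases "k = 1")
  case True
  have "(w - 2) mod 4 = 1 \<longleftrightarrow> w mod 4 \<noteq> 1"
    using assms(1) by presburger
  then show ?thesis using True by (simp add: chi4_def)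
next
  case False
  then have "\<exists>j. k = j + 2"
    using assms(2) by presburger
  then obtain j where "k = j + 2" ..
  then have "(2::int) ^ k = 4 * 2 ^ j"
    by simp
  then have "(w - 2 ^ k) mod 4 = w mod 4"
    by (simp add: mod_diff_eq[symmetric])
  then show ?thesis using False by (simp add: chi4_def)
qed

lemma sign_mult_sign_diff:
  fixes w K :: int
  assumes "0 < K" and "w \<noteq> K"
  shows "(if 0 < w then 1 else -1) * (if 0 < w - K then 1 else -1) =
    (if 0 < w \<and> w < K then -1 else (1::'a::ring_1))"
  using assms by auto

lemma Od_abs_mult_Od_abs_diff_pow2:
  fixes d :: int
  assumes not_dvd: "\<not> 2 ^ R dvd d"
  shows "Od (nat \<bar>d\<bar>) * Od (nat \<bar>d - 2 ^ R\<bar>) =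
    (if 0 < d \<and> d < 2 ^ R then -1 else 1) * (if 2 ^ (R - 1) dvd d then -1 else 1)"
proof -
  have "d \<noteq> 0"
    using not_dvd by auto
  define v where "v = multiplicity 2 d"
  obtain w where d: "d = 2 ^ v * w" and w: "odd w"
    using multiplicity_decompose'[OF \<open>d \<noteq> 0\<close>, of 2] unfolding v_def by auto
  have "v < R"
    using not_dvd power_dvd_iff_le_multiplicity[OF \<open>d \<noteq> 0\<close>, of 2 R] by (simp add: v_def)
  define k where "k = R - v"
  have k: "k \<ge> 1" "(2::int) ^ R = 2 ^ v * 2 ^ k"
    using \<open>v < R\<close> by (simp_all add: k_def flip: power_add)
  have d_shift: "d - 2 ^ R = 2 ^ v * (w - 2 ^ k)"
    using d k(2) by (simp add: algebra_simps)
  have w_shift: "odd (w - 2 ^ k)"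
    using w k(1) by simp
  have "0 < d \<longleftrightarrow> 0 < w" and "d < 2 ^ R \<longleftrightarrow> w < 2 ^ k"
    using d k(2) by (simp_all add: zero_less_mult_iff)
  moreover have "w \<noteq> 2 ^ k"
    using w_shift by auto
  ultimately have sign: "(if 0 < w then 1 else -1) * (if 0 < w - 2 ^ k then 1 else -1) =
      (if 0 < d \<and> d < 2 ^ R then -1 else (1::rat))"
    using sign_mult_sign_diff[of "2 ^ k" w] by simp
  have "2 ^ (R - 1) dvd d \<longleftrightarrow> k = 1"
    using \<open>v < R\<close> power_dvd_iff_le_multiplicity[OF \<open>d \<noteq> 0\<close>, of 2 "R - 1"]
    by (auto simp: v_def k_def)
  then have "chi4 w * chi4 (w - 2 ^ k) = (if 2 ^ (R - 1) dvd d then -1 else 1)"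
    using chi4_mult_chi4_diff_pow2[OF w k(1)] by simp
  moreover have "Od (nat \<bar>d\<bar>) * Od (nat \<bar>d - 2 ^ R\<bar>) =
      ((if 0 < w then 1 else -1) * (if 0 < w - 2 ^ k then 1 else -1)) * (chi4 w * chi4 (w - 2 ^ k))"
    unfolding d_shift using Od_abs_pow2_mult_odd[OF w, of v] Od_abs_pow2_mult_odd[OF w_shift, of v]
    by (simp add: d)
  ultimately show ?thesis
    using sign by simp
qed

lemma multiples_in_window:
  fixes q d :: int
  assumes "0 < q" and "- 2 * q < d" and "d < 4 * q" and "d \<noteq> 0" and "d \<noteq> 2 * q"
  shows "q dvd d \<longleftrightarrow> d \<in> {q, - q, 3 * q}" and "\<not> 2 * q dvd d"
proof -
  have multiple_iff: "q dvd d \<longleftrightarrow> (\<exists>j. d = q * j \<and> j \<in> {- 1, 1, 3})"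
  proof
    assume "q dvd d"
    then obtain j where j: "d = q * j" ..
    have "q * - 2 < q * j" and "q * j < q * 4"
      using assms(2,3) unfolding j by (simp_all add: algebra_simps)
    then have "- 2 < j" and "j < 4"
      using assms(1) mult_less_cancel_left_pos by blast+
    moreover have "j \<noteq> 0" and "j \<noteq> 2"
      using assms(4,5) unfolding j by auto
    ultimately show "\<exists>j. d = q * j \<and> j \<in> {- 1, 1, 3}"
      using j by auto
  qed auto
  then show "q dvd d \<longleftrightarrow> d \<in> {q, - q, 3 * q}"
    by (auto simp: algebra_simps)
  show "\<not> 2 * q dvd d"
  proof
    assume dvd: "2 * q dvd d"
    then have "q dvd d"
      using dvd_mult_right by blast
    then obtain j where j: "d = q * j" and "j \<in> {- 1, 1, 3}"
      using multiple_iff by blast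
    then have "odd j"
      by auto
    have "q * 2 dvd q * j"
      using dvd unfolding j by (simp add: mult.commute)
    then have "2 dvd j"
      using assms(1) by simp
    with \<open>odd j\<close> show False ..
  qed
qed

lemma Od_ratio_in_window:
  fixes d :: int
  assumes "R \<ge> 1" and "- (2 ^ R) < d" and "d < 2 ^ (R + 1)" and "d \<noteq> 0" and "d \<noteq> 2 ^ R"
  shows "Od (nat \<bar>d\<bar>) / Od (nat \<bar>d - 2 ^ R\<bar>) =
    (if 0 < d \<and> d < 2 ^ R then -1 else 1) *
    (if d \<in> {2 ^ (R - 1), - (2 ^ (R - 1)), 3 * 2 ^ (R - 1)} then -1 else 1)"
proof -
  define q :: int where "q = 2 ^ (R - 1)"
  have "(2::int) ^ R = 2 * q"
    using assms(1) by (cases R) (simp_all add: q_def)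
  then have "(2::int) ^ (R + 1) = 4 * q"
    by simp
  then have window: "\<not> 2 ^ R dvd d" "2 ^ (R - 1) dvd d \<longleftrightarrow> d \<in> {2 ^ (R - 1), - (2 ^ (R - 1)), 3 * 2 ^ (R - 1)}"
    using multiples_in_window[of q d] assms(2-5) unfolding q_def by simp_all
  have "Od (nat \<bar>d\<bar>) / Od (nat \<bar>d - 2 ^ R\<bar>) = Od (nat \<bar>d\<bar>) * Od (nat \<bar>d - 2 ^ R\<bar>)"
    using Od_eq_1_or_minus_1[of "nat \<bar>d - 2 ^ R\<bar>"] by auto
  then show ?thesis
    using Od_abs_mult_Od_abs_diff_pow2[OF window(1)] window(2) by simp
qed

lemma length_le_sum_list: "0 \<notin> set xs \<Longrightarrow> length xs \<le> sum_list (xs :: nat list)"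
  by (induction xs) auto

lemma Hset_le_size:
  assumes "is_partition lam N" and "x \<in> Hset lam"
  shows "x \<le> N"
proof -
  obtain j where j: "j < length lam" and x: "x = lam ! j + length lam - 1 - j"
    using assms(2) unfolding Hset_def by blast
  have no_zero: "0 \<notin> set lam" and sum: "sum_list lam = N"
    using assms(1) unfolding is_partition_def by auto
  have "sum_list lam = sum_list (take j lam) + lam ! j + sum_list (drop (Suc j) lam)"
    using j by (subst id_take_nth_drop[OF j]) simp
  moreover have "length (take j lam) \<le> sum_list (take j lam)"
    using no_zero by (intro length_le_sum_list) (meson in_set_takeD)
  moreover have "length (drop (Suc j) lam) \<le> sum_list (drop (Suc j) lam)"
    using no_zero by (intro length_le_sum_list) (meson in_set_dropD)
  ultimately show ?thesis
    using j x sum by simp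
qed

lemma finite_Hset: "finite (Hset lam)"
  by (simp add: Hset_def)

lemma prod_sign_indicator:
  assumes "finite S"
  shows "(\<Prod>x\<in>S. if P x then -1 else 1) = (-1 :: 'a::comm_ring_1) ^ card {x\<in>S. P x}"
  using assms by (simp add: prod.If_cases Collect_conj_eq Int_commute)

lemma card_filter_int_mem:
  assumes "finite T"
  shows "int (card {x\<in>X. int x \<in> T}) = (\<Sum>t\<in>T. Ind X t)"
proof -
  have "card {x\<in>X. int x \<in> T} = card (int ` {x\<in>X. int x \<in> T})"
    by (simp add: card_image)
  also have "int ` {x\<in>X. int x \<in> T} = {t\<in>T. t \<in> int ` X}"
    by auto
  finally show ?thesis
    using assms by (simp add: Ind_def flip: sum.inter_filter)
qed

lemma eta_cong_of_eta_prod: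
  assumes "eta_prod R lam h = (-1) ^ n"
  shows "[eta R lam h = int n] (mod 2)"
  using assms by (cases "even n") (auto simp: eta_def cong_def elim: oddE)

lemma hook_difference_in_window:
  assumes "m < 2 ^ R" and "is_partition lam (2 ^ R + m)" and "parent_with_hook R lam mu h"
    and "x \<in> Hset lam - {h}"
  shows "- (2 ^ R) < int h - int x" and "int h - int x < 2 ^ (R + 1)"
    and "int h - int x \<noteq> 0" and "int h - int x \<noteq> 2 ^ R"
proof -
  have h: "h \<in> Hset lam" "2 ^ R \<le> h" "h - 2 ^ R \<notin> Hset lam"
    using assms(3) unfolding parent_with_hook_def by auto
  have small: "int y < 2 * 2 ^ R" if "y \<in> Hset lam" for y
  proof -
    have "int y \<le> int (2 ^ R + m)"
      using Hset_le_size[OF assms(2) that] by (simp only: of_nat_le_iff)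
    also have "\<dots> = 2 ^ R + int m"
      by simp
    finally have "int y \<le> 2 ^ R + int m" .
    moreover have "int m < 2 ^ R"
      using assms(1) by simp
    ultimately show ?thesis
      by linarith
  qed
  have "2 ^ R \<le> int h"
    using h(2) by simp
  moreover have "int x < 2 * 2 ^ R"
    using small assms(4) by blast
  ultimately show "- (2 ^ R) < int h - int x"
    by linarith
  show "int h - int x < 2 ^ (R + 1)"
    using small[OF h(1)] by simp
  show "int h - int x \<noteq> 0"
    using assms(4) by simp
  have "int x \<noteq> int (h - 2 ^ R)"
    using assms(4) h(3) by auto
  then show "int h - int x \<noteq> 2 ^ R"
    using h(2) by (simp add: of_nat_diff)
qed

lemma eta_prod_of_parent:
  assumes "R \<ge> 1" and "m < 2 ^ R" and "is_partition lam (2 ^ R + m)"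
    and "parent_with_hook R lam mu h"
  shows "eta_prod R lam h = (-1) ^
    (card {x\<in>Hset lam - {h}. int h - 2 ^ R < int x \<and> x < h} +
     card {x\<in>Hset lam - {h}. int x \<in> {int h - 2 ^ (R - 1), int h + 2 ^ (R - 1), int h - 3 * 2 ^ (R - 1)}})"
    (is "_ = (-1) ^ (card {x\<in>_. ?A x} + card {x\<in>_. ?B x})")
proof -
  have "Od (nat \<bar>int h - int x\<bar>) / Od (nat \<bar>int h - 2 ^ R - int x\<bar>) =
      (if ?A x then -1 else 1) * (if ?B x then -1 else 1)" if "x \<in> Hset lam - {h}" for x
    using Od_ratio_in_window[OF assms(1) hook_difference_in_window[OF assms(2-4) that]] that
    by (auto simp: algebra_simps)
  then have "eta_prod R lam h = (\<Prod>x\<in>Hset lam - {h}. (if ?A x then -1 else 1) * (if ?B x then -1 else 1))"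
    unfolding eta_prod_def by (rule prod.cong[OF refl])
  also have "\<dots> = (-1) ^ (card {x\<in>Hset lam - {h}. ?A x} + card {x\<in>Hset lam - {h}. ?B x})"
    using finite_Hset by (simp only: prod.distrib prod_sign_indicator finite_Diff power_add)
  finally show ?thesis .
qed

theorem proposition3p5:
  fixes R m h :: nat and lam mu :: "nat list"
  assumes "R \<ge> 1" and "m < 2 ^ R"
    and "is_partition mu m" and "is_partition lam (2 ^ R + m)"
    and "parent_with_hook R lam mu h"
  shows "[eta R lam h = N_count R lam h - Ind (Hset lam) (int h - 2 ^ (R - 1))
            + Ind (Hset lam) (int h + 2 ^ (R - 1)) + Ind (Hset lam) (int h - 3 * 2 ^ (R - 1))] (mod 2)"
proof -
  define H where "H = Hset lam"
  define q :: int where "q = 2 ^ (R - 1)"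
  have "q > 0"
    by (simp add: q_def)
  have "{x\<in>H - {h}. int h - 2 ^ R < int x \<and> x < h} = {x\<in>H. int h - 2 ^ R < int x \<and> x < h}"
    by auto
  moreover have "{x\<in>H - {h}. int x \<in> {int h - q, int h + q, int h - 3 * q}} =
      {x\<in>H. int x \<in> {int h - q, int h + q, int h - 3 * q}}"
    using \<open>q > 0\<close> by auto
  moreover have "int (card {x\<in>H. int x \<in> {int h - q, int h + q, int h - 3 * q}}) =
      Ind H (int h - q) + Ind H (int h + q) + Ind H (int h - 3 * q)"
    using card_filter_int_mem[of "{int h - q, int h + q, int h - 3 * q}" H] \<open>q > 0\<close> by simp
  ultimately have "[eta R lam h = N_count R lam h + Ind H (int h - q) + Ind H (int h + q) + Ind H (int h - 3 * q)] (mod 2)"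
    using eta_cong_of_eta_prod[OF eta_prod_of_parent[OF assms(1,2,4,5)]]
    unfolding N_count_def H_def q_def by (simp add: ac_simps)
  moreover have "[N_count R lam h + Ind H (int h - q) + Ind H (int h + q) + Ind H (int h - 3 * q)
      = N_count R lam h - Ind H (int h - q) + Ind H (int h + q) + Ind H (int h - 3 * q)] (mod 2)"
    unfolding cong_def by presburger
  ultimately show ?thesis
    unfolding H_def q_def by (rule cong_trans)
qed

end
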